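(* Let $\sigma>0$, $\alpha>0$, $\Lambda = \frac{1}{\sigma}\sqrt{\Gamma(3/\alpha)/\Gamma(1/\alpha)}$, and let $Z$ be a real random variable with density $f_Z(z) = \frac{\alpha \Lambda^2}{\Gamma(1/\alpha)^2} K_0\!\left(2\Lambda^\alpha |z|^{\alpha/2}\right)$. Then for every $s$ with $\operatorname{Re} s > 0$, the Mellin transform of the density of $|Z|$ (equivalently, $\mathbb{E}\bigl[|Z|^{s-1}\bigr]$) is $$\int_0^\infty z^{s-1}\, 2 f_Z(z)\, dz = \mathbb{E}\bigl[|Z|^{s-1}\bigr] = \frac{\Lambda^{2-2s}}{\Gamma(1/\alpha)^2}\,\Gamma\!\left(\frac{s}{\alpha}\right)^2 .$$
   Context: $K_0$ is the modified Bessel function of the second kind of order $0$; $\Gamma$ is the Euler Gamma function. This $f_Z$ is the density of the product of two independent generalized normal $GND(0,\sigma,\alpha)$ variables (density $\frac{\alpha\Lambda}{2\Gamma(1/\alpha)} e^{-\Lambda^\alpha |x|^\alpha}$). The density of $|Z|$ is $2f_Z(z)$ for $z>0$. *)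

theory Defs
  imports "HOL-Analysis.Analysis"
begin

text \<open>Modified Bessel function of the second kind of order 0, via its standard
integral representation K_0(x) = integral over t from 0 to infinity of exp(-x cosh t),
valid for x > 0 (only used for x > 0 below).\<close>
definition besselK0 :: "real \<Rightarrow> real" where
  "besselK0 x = integral {0..} (\<lambda>t. exp (- x * cosh t))"

definition gnd_Lambda :: "real \<Rightarrow> real \<Rightarrow> real" where
  "gnd_Lambda \<sigma> \<alpha> = (1 / \<sigma>) * sqrt (Gamma (3 / \<alpha>) / Gamma (1 / \<alpha>))"

text \<open>Density of the product Z of two independent GND(0, sigma, alpha) variables.\<close>
definition prod_gnd_density :: "real \<Rightarrow> real \<Rightarrow> real \<Rightarrow> real" where
  "prod_gnd_density \<sigma> \<alpha> z =
     (let \<Lambda> = gnd_Lambda \<sigma> \<alpha> in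
        \<alpha> * \<Lambda>^2 / (Gamma (1 / \<alpha>))^2 * besselK0 (2 * \<Lambda> powr \<alpha> * \<bar>z\<bar> powr (\<alpha> / 2)))"

end

theory Submission
  imports Defs
begin

(*
  Substituting u = y e^t and u = y e^(-t) in K_0(2y) = int_0^oo exp(-2y cosh t) dt shows
  2 K_0(2y) = int_0^oo exp(-u - y^2/u) du/u, the two substitutions covering [y, oo) and (0, y].
  With y = b z^(a/2), the Mellin transform of 2 K_0(2 b z^(a/2)) becomes a double integral over
  (u, z) in (0, oo)^2; it converges absolutely because the modulus of the integrand is the
  integrand for Re s in place of s.  Integrating out z first gives the Mellin transform of a
  stretched exponential, int_0^oo z^(s-1) exp(-(b^2/u) z^a) dz = (b^2/u)^(-s/a) Gamma(s/a)/a
  (Euler's integral after v = (b^2/u) z^a), and the remaining integral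
  int_0^oo e^(-u) u^(s/a-1) du is Gamma(s/a) once more.  Hence
  int_0^oo z^(s-1) 2 K_0(2 b z^(a/2)) dz = b^(-2s/a) Gamma(s/a)^2 / a, and the theorem is the
  case a = alpha, b = Lambda^alpha, scaled by the normalising constant of f_Z.
*)

lemma of_real_powr_eq_exp_ln: "x > 0 \<Longrightarrow> complex_of_real x powr s = exp (s * of_real (ln x))"
  by (simp add: powr_def Ln_of_real)

lemma of_real_powr_powr_complex:
  "x > 0 \<Longrightarrow> complex_of_real (x powr r) powr w = complex_of_real x powr (of_real r * w)"
  by (simp add: of_real_powr_eq_exp_ln ln_powr mult_ac)

lemma borel_measurable_of_real_powr_complex [measurable]:
  assumes [measurable]: "f \<in> borel_measurable M"
  shows "(\<lambda>x. complex_of_real (f x) powr s) \<in> borel_measurable M"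
proof -
  have "complex_of_real x powr s =
      (if x = 0 then 0 else exp (s * (of_real (ln \<bar>x\<bar>) + (if x < 0 then pi else 0) * \<i>)))" for x :: real
    by (simp add: powr_def Ln_of_real')
  then show ?thesis by simp
qed

lemma set_integrable_lborel_if_absolutely_integrable:
  fixes f :: "'a::euclidean_space \<Rightarrow> 'b::euclidean_space"
  assumes "f absolutely_integrable_on S" "S \<in> sets lborel" "f \<in> borel_measurable lborel"
  shows "set_integrable lborel S f"
  using assms integrable_completion[of "\<lambda>x. indicator S x *\<^sub>R f x" lborel]
  by (simp add: set_integrable_def)

lemma absolutely_integrable_substitution_scaled_powr:
  fixes f :: "real \<Rightarrow> 'b::euclidean_space"
  assumes c: "c > 0" and a: "a > 0" and f: "f absolutely_integrable_on {0<..}"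
  shows "(\<lambda>z. (c * a * z powr (a - 1)) *\<^sub>R f (c * z powr a)) absolutely_integrable_on {0<..}"
    and "integral {0<..} (\<lambda>z. (c * a * z powr (a - 1)) *\<^sub>R f (c * z powr a)) = integral {0<..} f"
proof -
  define g where "g z = c * z powr a" for z :: real
  have deriv: "(g has_real_derivative c * a * z powr (a - 1)) (at z within {0<..})"
    if "z \<in> {0<..}" for z
    using that unfolding g_def by (auto intro!: derivative_eq_intros)
  have inj: "inj_on g {0<..}"
    using c a by (intro strict_mono_on_imp_inj_on strict_mono_onI) (auto simp: g_def powr_less_mono2)
  have img: "g ` {0<..} = {0<..}"
  proof (intro equalityI subsetI)
    fix v :: real assume "v \<in> {0<..}"
    then have "v = g ((v / c) powr (1 / a))" "(v / c) powr (1 / a) \<in> {0<..}"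
      using c a by (auto simp: g_def powr_powr)
    then show "v \<in> g ` {0<..}" by blast
  qed (use c in \<open>auto simp: g_def\<close>)
  show "(\<lambda>z. (c * a * z powr (a - 1)) *\<^sub>R f (c * z powr a)) absolutely_integrable_on {0<..}"
    and "integral {0<..} (\<lambda>z. (c * a * z powr (a - 1)) *\<^sub>R f (c * z powr a)) = integral {0<..} f"
    using has_absolute_integral_change_of_variables_real[where f = f and b = "integral {0<..} f", OF _ deriv inj]
      f img c a by (simp_all add: g_def)
qed

lemma Gamma_integrand_substitution_scaled_powr:
  fixes c a z :: real and w :: complex
  assumes c: "c > 0" and a: "a > 0" and z: "z > 0"
  shows "(c * a * z powr (a - 1)) *\<^sub>R (of_real (c * z powr a) powr (w - 1) / of_real (exp (c * z powr a)))
    = of_real a * of_real c powr w * (of_real z powr (of_real a * w - 1) * of_real (exp (- c * z powr a)))"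
proof -
  let ?A = "complex_of_real (ln c + (a - 1) * ln z)"
    and ?B = "(w - 1) * complex_of_real (ln c + a * ln z)"
  have "c * a * z powr (a - 1) = a * exp (ln c + (a - 1) * ln z)"
    using c z by (simp add: powr_def exp_add)
  moreover have "of_real (c * z powr a) powr (w - 1) = exp ?B"
    using c z by (subst of_real_powr_eq_exp_ln) (simp_all add: ln_mult ln_powr)
  ultimately have "(c * a * z powr (a - 1)) *\<^sub>R (of_real (c * z powr a) powr (w - 1) / of_real (exp (c * z powr a)))
      = of_real a * exp ?A * (exp ?B / of_real (exp (c * z powr a)))"
    by (simp only: scaleR_conv_of_real of_real_mult exp_of_real)
  also have "\<dots> = of_real a * (exp (w * of_real (ln c)) * exp ((of_real a * w - 1) * of_real (ln z)))
      / of_real (exp (c * z powr a))"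
    by (simp add: algebra_simps flip: exp_add)
  also have "\<dots> = of_real a * of_real c powr w * (of_real z powr (of_real a * w - 1) * of_real (exp (- c * z powr a)))"
    using c z by (simp add: of_real_powr_eq_exp_ln exp_minus field_simps)
  finally show ?thesis .
qed

lemma Mellin_exp_neg_powr:
  fixes c a :: real and s :: complex
  assumes c: "c > 0" and a: "a > 0" and s: "Re s > 0"
  shows "set_integrable lborel {0<..} (\<lambda>z. of_real z powr (s - 1) * of_real (exp (- c * z powr a)))"
    and "(LINT z:{0<..}|lborel. of_real z powr (s - 1) * of_real (exp (- c * z powr a)))
           = of_real c powr (- s / of_real a) * Gamma (s / of_real a) / of_real a"
proof -
  define w where "w = s / of_real a"
  have w: "Re w > 0"
    using s a by (simp add: w_def Re_divide_of_real)
  define g where "g = (\<lambda>v::real. of_real v powr (w - 1) / of_real (exp v))"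
  define K where "K = of_real a * of_real c powr w"
  have g: "g absolutely_integrable_on {0<..}" "integral {0<..} g = Gamma w"
    unfolding g_def using absolutely_integrable_Gamma_integral'[OF w] Gamma_integral_complex'[OF w]
    by (auto intro: integral_unique)
  let ?f = "\<lambda>z. of_real z powr (s - 1) * of_real (exp (- c * z powr a))"
  have f_eq: "?f z = inverse K * ((c * a * z powr (a - 1)) *\<^sub>R g (c * z powr a))" if "z \<in> {0<..}" for z
    using Gamma_integrand_substitution_scaled_powr[of c a z w] that c a
    by (simp add: g_def K_def w_def field_simps)
  have "?f absolutely_integrable_on {0<..}"
    using set_integrable_mult_right[OF absolutely_integrable_substitution_scaled_powr(1)[OF c a g(1)]]
    by (subst set_integrable_cong[OF refl refl f_eq]) auto
  then show integrable: "set_integrable lborel {0<..} ?f"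
    by (rule set_integrable_lborel_if_absolutely_integrable) auto
  have "(LINT z:{0<..}|lborel. ?f z) = integral {0<..} ?f"
    using integrable by (rule set_borel_integral_eq_integral)
  also have "\<dots> = inverse K * Gamma w"
    using absolutely_integrable_substitution_scaled_powr(2)[OF c a g(1)] g(2)
    by (simp only: integral_cong[OF f_eq] integral_mult_right)
  also have "\<dots> = of_real c powr (- s / of_real a) * Gamma (s / of_real a) / of_real a"
    by (simp add: K_def w_def powr_minus field_simps)
  finally show "(LINT z:{0<..}|lborel. ?f z) = of_real c powr (- s / of_real a) * Gamma (s / of_real a) / of_real a" .
qed

lemma Gamma_integral_exp_neg_div_powr:
  fixes c :: real and w :: complex
  assumes c: "c > 0" and w: "Re w > 0"
  shows "set_integrable lborel {0<..} (\<lambda>u. of_real (exp (- u) / u) * of_real (c / u) powr (- w))"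
    and "(LINT u:{0<..}|lborel. of_real (exp (- u) / u) * of_real (c / u) powr (- w)) = of_real c powr (- w) * Gamma w"
proof -
  let ?g = "\<lambda>u::real. of_real u powr (w - 1) / of_real (exp u)"
  have g: "set_integrable lborel {0<..} ?g"
    using absolutely_integrable_Gamma_integral'[OF w]
    by (rule set_integrable_lborel_if_absolutely_integrable) auto
  have eq: "of_real (exp (- u) / u) * of_real (c / u) powr (- w) = of_real c powr (- w) * ?g u"
    if "u \<in> {0<..}" for u
  proof -
    have u: "u > 0" using that by simp
    have p1: "of_real (c / u) powr (- w) = exp (- w * of_real (ln c)) * exp (w * of_real (ln u))"
      by (subst of_real_powr_eq_exp_ln) (use c u in \<open>simp_all add: ln_div algebra_simps flip: exp_add\<close>)
    have p2: "of_real u powr (w - 1) = exp (w * of_real (ln u)) / of_real u"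
      using u by (simp add: of_real_powr_eq_exp_ln algebra_simps exp_diff exp_of_real)
    have p3: "of_real c powr (- w) = exp (- w * of_real (ln c))"
      using c by (simp add: of_real_powr_eq_exp_ln)
    show ?thesis
      unfolding p1 p2 p3 using u by (simp add: exp_minus field_simps)
  qed
  show "set_integrable lborel {0<..} (\<lambda>u. of_real (exp (- u) / u) * of_real (c / u) powr (- w))"
    using set_integrable_mult_right[OF g] by (subst set_integrable_cong[OF refl refl eq]) auto
  have "(LINT u:{0<..}|lborel. of_real (exp (- u) / u) * of_real (c / u) powr (- w))
      = (LINT u:{0<..}|lborel. of_real c powr (- w) * ?g u)"
    by (rule set_lebesgue_integral_cong) (simp, use eq in blast)
  also have "\<dots> = of_real c powr (- w) * (LINT u:{0<..}|lborel. ?g u)"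
    by (rule set_integral_mult_right)
  also have "(LINT u:{0<..}|lborel. ?g u) = Gamma w"
    using set_borel_integral_eq_integral(2)[OF g] integral_unique[OF Gamma_integral_complex'[OF w]] by simp
  finally show "(LINT u:{0<..}|lborel. of_real (exp (- u) / u) * of_real (c / u) powr (- w)) = of_real c powr (- w) * Gamma w" .
qed

lemma absolutely_integrable_exp_neg_add_inverse_div:
  fixes q :: real
  assumes q: "q > 0"
  shows "(\<lambda>u. exp (- u - q / u) / u) absolutely_integrable_on {0<..}"
proof (rule measurable_bounded_by_integrable_imp_absolutely_integrable)
  show "(\<lambda>u. exp (- u - q / u) / u) \<in> borel_measurable (lebesgue_on {0<..})"
    by (intro continuous_imp_measurable_on_sets_lebesgue continuous_intros) auto
  have "(\<lambda>u. exp (- 1 * u) / q) integrable_on {0..}"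
    using integrable_on_exp_minus_to_infinity[of 1 0] by (rule integrable_on_divide) simp
  then show "(\<lambda>u. exp (- 1 * u) / q) integrable_on {0<..}"
    by (rule integrable_spike_set) (auto intro: negligible_subset[of "{0}"])
  show "norm (exp (- u - q / u) / u) \<le> exp (- 1 * u) / q" if "u \<in> {0<..}" for u
  proof -
    have u: "u > 0" using that by simp
    have "q / u \<le> exp (q / u)"
      using exp_ge_add_one_self[of "q / u"] by linarith
    then have bound: "exp (- (q / u)) \<le> u / q"
      using u q by (simp add: exp_minus field_simps)
    have "norm (exp (- u - q / u) / u) = exp (- u) * exp (- (q / u)) / u"
      using u by (simp flip: exp_add)
    also have "\<dots> \<le> exp (- u) * (u / q) / u"
      using u bound by (intro divide_right_mono mult_left_mono) auto
    also have "\<dots> = exp (- 1 * u) / q"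
      using u by simp
    finally show ?thesis .
  qed
qed auto

lemma besselK0_eq_integral_substitution:
  fixes y c :: real
  assumes y: "y > 0" and c: "\<bar>c\<bar> = 1"
    and image: "(\<lambda>t. y * exp (c * t)) ` {0..} = T"
    and integrable: "(\<lambda>u. exp (- u - y^2 / u) / u) absolutely_integrable_on T"
  shows "besselK0 (2 * y) = integral T (\<lambda>u. exp (- u - y^2 / u) / u)"
proof -
  define g where "g = (\<lambda>t. y * exp (c * t))"
  define \<phi> where "\<phi> = (\<lambda>u. exp (- u - y^2 / u) / u)"
  have deriv: "(g has_real_derivative c * g t) (at t within {0..})" for t
    unfolding g_def by (auto intro!: derivative_eq_intros)
  have inj: "inj_on g {0..}"
    using y c by (auto intro!: inj_onI simp: g_def)
  have pointwise: "\<bar>c * g t\<bar> *\<^sub>R \<phi> (g t) = exp (- (2 * y) * cosh t)" for t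
  proof -
    have "c = 1 \<or> c = - 1"
      using c by arith
    then have "exp (c * t) + exp (- (c * t)) = 2 * cosh t"
      by (auto simp: cosh_def)
    moreover have "y^2 / g t = y * exp (- (c * t))"
      using y by (simp add: g_def exp_minus power2_eq_square field_simps)
    moreover have "\<bar>c * g t\<bar> = g t"
      using y c by (simp add: g_def abs_mult)
    ultimately show ?thesis
      using y by (simp add: g_def \<phi>_def algebra_simps flip: distrib_left)
  qed
  have "integral {0..} (\<lambda>t. \<bar>c * g t\<bar> *\<^sub>R \<phi> (g t)) = integral T \<phi>"
    using has_absolute_integral_change_of_variables_real[where f = \<phi> and b = "integral T \<phi>", OF _ deriv inj]
      image[folded g_def] integrable[folded \<phi>_def] by simp
  then show ?thesis
    unfolding besselK0_def pointwise by (simp add: \<phi>_def)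
qed

lemma besselK0_eq_integral:
  fixes y :: real
  assumes y: "y > 0"
  shows "(LINT u:{0<..}|lborel. exp (- u - y^2 / u) / u) = 2 * besselK0 (2 * y)"
proof -
  let ?\<phi> = "\<lambda>u. exp (- u - y^2 / u) / u"
  have \<phi>: "?\<phi> absolutely_integrable_on {0<..}"
    using absolutely_integrable_exp_neg_add_inverse_div[of "y^2"] y by simp
  have lower_int: "?\<phi> absolutely_integrable_on {0<..y}" and upper_int: "?\<phi> absolutely_integrable_on {y..}"
    using y by (auto intro!: set_integrable_subset[OF \<phi>])
  have "(\<lambda>t. y * exp (1 * t)) ` {0..} = {y..}"
  proof (intro equalityI subsetI)
    fix v assume "v \<in> {y..}"
    then have "v = y * exp (1 * ln (v / y))" "ln (v / y) \<in> {0..}"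
      using y by auto
    then show "v \<in> (\<lambda>t. y * exp (1 * t)) ` {0..}" by blast
  qed (use y in auto)
  from besselK0_eq_integral_substitution[OF y _ this upper_int]
  have upper: "besselK0 (2 * y) = integral {y..} ?\<phi>" by simp
  have "(\<lambda>t. y * exp (- 1 * t)) ` {0..} = {0<..y}"
  proof (intro equalityI subsetI)
    fix v assume "v \<in> {0<..y}"
    then have "v = y * exp (- 1 * (- ln (v / y)))" "- ln (v / y) \<in> {0..}"
      using y by auto
    then show "v \<in> (\<lambda>t. y * exp (- 1 * t)) ` {0..}" by blast
  qed (use y in auto)
  from besselK0_eq_integral_substitution[OF y _ this lower_int]
  have lower: "besselK0 (2 * y) = integral {0<..y} ?\<phi>" by simp
  have "integral ({0<..y} \<union> {y..}) ?\<phi> = integral {0<..y} ?\<phi> + integral {y..} ?\<phi>"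
    using set_lebesgue_integral_eq_integral(1)[OF lower_int] set_lebesgue_integral_eq_integral(1)[OF upper_int]
    by (intro integral_Un) (auto intro: negligible_subset[of "{y}"])
  moreover have "{0<..y} \<union> {y..} = {0<..}"
    using y by auto
  moreover have "(LINT u:{0<..}|lborel. ?\<phi> u) = integral {0<..} ?\<phi>"
    using \<phi> by (intro set_borel_integral_eq_integral set_integrable_lborel_if_absolutely_integrable) auto
  ultimately show ?thesis
    using upper lower by simp
qed

definition besselK0_Mellin_kernel :: "real \<Rightarrow> real \<Rightarrow> complex \<Rightarrow> real \<Rightarrow> real \<Rightarrow> complex" where
  "besselK0_Mellin_kernel a b s u z = indicator {0<..} u *\<^sub>R indicator {0<..} z *\<^sub>R
     (of_real z powr (s - 1) * of_real (exp (- u - b^2 * z powr a / u) / u))"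

lemma besselK0_Mellin_kernel_integral_z:
  fixes a b :: real and s :: complex
  assumes a: "a > 0" and b: "b > 0" and s: "Re s > 0"
  shows "integrable lborel (besselK0_Mellin_kernel a b s u)" (is ?integrable)
    and "(\<integral>z. besselK0_Mellin_kernel a b s u z \<partial>lborel) = indicator {0<..} u *\<^sub>R
           (of_real (exp (- u) / u) * of_real (b^2 / u) powr (- (s / of_real a))) * (Gamma (s / of_real a) / of_real a)"
      (is ?integral)
proof -
  have "?integrable \<and> ?integral"
  proof (cases "u > 0")
    case u: True
    have exp_factor: "exp (- u - b^2 * z powr a / u) = exp (- u) * exp (- (b^2 / u) * z powr a)" for z
      by (simp flip: exp_add)
    let ?m = "\<lambda>z. of_real z powr (s - 1) * of_real (exp (- (b^2 / u) * z powr a))"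
    have kernel: "besselK0_Mellin_kernel a b s u = (\<lambda>z. of_real (exp (- u) / u) * (indicator {0<..} z *\<^sub>R ?m z))"
      using u by (intro ext) (unfold besselK0_Mellin_kernel_def exp_factor, simp)
    have "b^2 / u > 0"
      using b u by simp
    note Mellin = Mellin_exp_neg_powr[OF this a s, unfolded set_integrable_def set_lebesgue_integral_def]
    have ?integrable
      unfolding kernel by (rule integrable_mult_right[OF Mellin(1)])
    moreover have ?integral
      unfolding kernel integral_mult_right_zero Mellin(2) using u by (simp add: mult_ac)
    ultimately show ?thesis ..
  next
    case False
    then have "besselK0_Mellin_kernel a b s u = (\<lambda>z. 0)"
      by (intro ext) (simp add: besselK0_Mellin_kernel_def)
    with False show ?thesis
      by simp
  qed
  then show ?integrable and ?integral
    by simp_all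
qed

lemma besselK0_Mellin_kernel_integral_u:
  fixes a b z :: real and s :: complex
  assumes b: "b > 0"
  shows "(\<integral>u. besselK0_Mellin_kernel a b s u z \<partial>lborel)
    = indicator {0<..} z *\<^sub>R (of_real z powr (s - 1) * of_real (2 * besselK0 (2 * b * z powr (a / 2))))"
proof (cases "z > 0")
  case z: True
  define y where "y = b * z powr (a / 2)"
  have "(z powr (a / 2))^2 = z powr a"
    by (simp add: power2_eq_square flip: powr_add)
  then have y: "y > 0" and y2: "b^2 * z powr a = y^2"
    using b z by (simp_all add: y_def power_mult_distrib)
  have "(\<lambda>u. besselK0_Mellin_kernel a b s u z)
      = (\<lambda>u. of_real z powr (s - 1) * of_real (indicator {0<..} u *\<^sub>R (exp (- u - y^2 / u) / u)))"
    using z by (intro ext) (simp add: besselK0_Mellin_kernel_def y2 scaleR_conv_of_real)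
  then have "(\<integral>u. besselK0_Mellin_kernel a b s u z \<partial>lborel)
      = of_real z powr (s - 1) * of_real (LINT u:{0<..}|lborel. exp (- u - y^2 / u) / u)"
    by (simp only: integral_mult_right_zero integral_complex_of_real set_lebesgue_integral_def)
  then show ?thesis
    using z unfolding besselK0_eq_integral[OF y] by (simp add: y_def mult.assoc)
qed (simp add: besselK0_Mellin_kernel_def)

lemma norm_besselK0_Mellin_kernel:
  "norm (besselK0_Mellin_kernel a b s u z) = Re (besselK0_Mellin_kernel a b (of_real (Re s)) u z)"
proof (cases "u > 0 \<and> z > 0")
  case True
  have "norm (of_real z powr (s - 1)) = z powr (Re s - 1)"
    using True by (simp add: norm_powr_real_powr)
  moreover have "complex_of_real z powr (of_real (Re s) - 1) = of_real (z powr (Re s - 1))"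
    using True powr_of_real[of z "Re s - 1"] by simp
  ultimately show ?thesis
    using True by (simp add: besselK0_Mellin_kernel_def norm_divide norm_mult del: of_real_divide)
qed (auto simp: besselK0_Mellin_kernel_def)

lemma integrable_besselK0_Mellin_kernel:
  fixes a b :: real and s :: complex
  assumes a: "a > 0" and b: "b > 0" and s: "Re s > 0"
  shows "integrable (lborel \<Otimes>\<^sub>M lborel) (case_prod (besselK0_Mellin_kernel a b s))"
proof (rule lborel_pair.Fubini_integrable)
  show "case_prod (besselK0_Mellin_kernel a b s) \<in> borel_measurable (lborel \<Otimes>\<^sub>M lborel)"
    unfolding besselK0_Mellin_kernel_def by measurable
  define \<sigma> where "\<sigma> = complex_of_real (Re s)"
  have \<sigma>: "Re \<sigma> > 0" "Re (\<sigma> / of_real a) > 0"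
    using s a by (simp_all add: \<sigma>_def Re_divide_of_real)
  have "b^2 > 0"
    using b by simp
  note Gamma = Gamma_integral_exp_neg_div_powr(1)[OF this \<sigma>(2), unfolded set_integrable_def]
  have norm_integral: "(\<integral>z. norm (case_prod (besselK0_Mellin_kernel a b s) (u, z)) \<partial>lborel) = Re (indicator {0<..} u *\<^sub>R
      (of_real (exp (- u) / u) * of_real (b^2 / u) powr (- (\<sigma> / of_real a))) * (Gamma (\<sigma> / of_real a) / of_real a))" for u
  proof -
    have "(\<integral>z. norm (case_prod (besselK0_Mellin_kernel a b s) (u, z)) \<partial>lborel)
        = Re (\<integral>z. besselK0_Mellin_kernel a b \<sigma> u z \<partial>lborel)"
      using besselK0_Mellin_kernel_integral_z(1)[OF a b \<sigma>(1), of u]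
      by (simp add: norm_besselK0_Mellin_kernel \<sigma>_def)
    then show ?thesis
      by (simp only: besselK0_Mellin_kernel_integral_z(2)[OF a b \<sigma>(1)])
  qed
  show "integrable lborel (\<lambda>u. \<integral>z. norm (case_prod (besselK0_Mellin_kernel a b s) (u, z)) \<partial>lborel)"
    unfolding norm_integral by (intro integrable_Re integrable_mult_left Gamma)
  show "AE u in lborel. integrable lborel (\<lambda>z. case_prod (besselK0_Mellin_kernel a b s) (u, z))"
    using besselK0_Mellin_kernel_integral_z(1)[OF a b s] by simp
qed

lemma Mellin_besselK0_powr:
  fixes a b :: real and s :: complex
  assumes a: "a > 0" and b: "b > 0" and s: "Re s > 0"
  shows "((\<lambda>z. of_real z powr (s - 1) * of_real (2 * besselK0 (2 * b * z powr (a / 2))))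
           has_integral of_real b powr (- 2 * s / of_real a) * Gamma (s / of_real a)^2 / of_real a) {0<..}"
    (is "(?f has_integral ?mellin) _")
proof -
  note integrable = integrable_besselK0_Mellin_kernel[OF a b s]
  have f: "set_integrable lborel {0<..} ?f"
    using lborel_pair.integrable_snd[OF integrable]
    by (simp add: besselK0_Mellin_kernel_integral_u[OF b] set_integrable_def)
  have w: "Re (s / of_real a) > 0"
    using s a by (simp add: Re_divide_of_real)
  have b2_powr: "of_real (b^2) powr (- (s / of_real a)) = of_real b powr (- 2 * s / of_real a)"
    using b of_real_powr_powr_complex[of b 2 "- (s / of_real a)"] by simp
  have "(\<integral>u. \<integral>z. besselK0_Mellin_kernel a b s u z \<partial>lborel \<partial>lborel)
      = (LINT u:{0<..}|lborel. of_real (exp (- u) / u) * of_real (b^2 / u) powr (- (s / of_real a)))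
          * (Gamma (s / of_real a) / of_real a)"
    by (simp only: besselK0_Mellin_kernel_integral_z(2)[OF a b s] integral_mult_left_zero set_lebesgue_integral_def)
  also have "\<dots> = ?mellin"
    using Gamma_integral_exp_neg_div_powr(2)[of "b^2", OF _ w] b b2_powr by (simp add: power2_eq_square)
  finally have "(LINT z:{0<..}|lborel. ?f z) = ?mellin"
    using lborel_pair.Fubini_integral[OF integrable]
    by (simp add: besselK0_Mellin_kernel_integral_u[OF b] set_lebesgue_integral_def)
  moreover have "(?f has_integral (LINT z:{0<..}|lborel. ?f z)) {0<..}"
    using set_borel_integral_eq_integral[OF f] by (simp add: integrable_integral)
  ultimately show ?thesis
    by simp
qed

theorem theorem6:
  fixes \<sigma> \<alpha> :: real and s :: complex
  assumes "\<sigma> > 0" and "\<alpha> > 0" and "Re s > 0"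
  shows "((\<lambda>z::real. (of_real z) powr (s - 1) * of_real (2 * prod_gnd_density \<sigma> \<alpha> z))
           has_integral
          (of_real (gnd_Lambda \<sigma> \<alpha>) powr (2 - 2 * s) / of_real ((Gamma (1 / \<alpha>))^2)
             * (Gamma (s / of_real \<alpha>))^2)) {0<..}"
proof -
  define \<Lambda> where "\<Lambda> = gnd_Lambda \<sigma> \<alpha>"
  have \<Lambda>: "\<Lambda> > 0"
    using assms Gamma_real_pos[of "1 / \<alpha>"] Gamma_real_pos[of "3 / \<alpha>"] by (simp add: \<Lambda>_def gnd_Lambda_def)
  define C where "C = complex_of_real (\<alpha> * \<Lambda>^2 / (Gamma (1 / \<alpha>))^2)"
  let ?f = "\<lambda>z. of_real z powr (s - 1) * of_real (2 * besselK0 (2 * \<Lambda> powr \<alpha> * z powr (\<alpha> / 2)))"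
  have "\<Lambda> powr \<alpha> > 0"
    using \<Lambda> by simp
  note integral = Mellin_besselK0_powr[OF assms(2) this assms(3)]
  have "of_real (\<Lambda> powr \<alpha>) powr (- 2 * s / of_real \<alpha>) = of_real \<Lambda> powr (- 2 * s)"
    using \<Lambda> assms by (simp add: of_real_powr_powr_complex)
  moreover have "of_real \<Lambda> powr (2 - 2 * s) = of_real (\<Lambda>^2) * of_real \<Lambda> powr (- 2 * s)"
    using powr_add[of "complex_of_real \<Lambda>" 2 "- 2 * s"] \<Lambda> by simp
  ultimately have scaling: "C * (of_real (\<Lambda> powr \<alpha>) powr (- 2 * s / of_real \<alpha>) * Gamma (s / of_real \<alpha>)^2 / of_real \<alpha>)
      = of_real \<Lambda> powr (2 - 2 * s) / of_real ((Gamma (1 / \<alpha>))^2) * (Gamma (s / of_real \<alpha>))^2"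
    using assms by (simp add: C_def field_simps)
  have density: "of_real z powr (s - 1) * of_real (2 * prod_gnd_density \<sigma> \<alpha> z) = C * ?f z"
    if "z \<in> {0<..}" for z
    using that by (simp add: prod_gnd_density_def Let_def C_def \<Lambda>_def mult_ac)
  from has_integral_mult_right[OF integral, of C] show ?thesis
    unfolding scaling \<Lambda>_def[symmetric] by (simp only: has_integral_cong[OF density])
qed

end
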